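(* Let $P,Q$ be persistence diagrams satisfying the standing assumptions, and let $d_T^{per}(P,Q)$ be defined from a shifted quadtree as in the context (for any fixed shift). Then there is an absolute constant $C$ such that $d_W(P,Q)\le C\cdot d_T^{per}(P,Q)$.
   Context: A persistence diagram is a finite multiset of points in $\mathbb{R}^2$. Let $L=\{(x,x)\mid x\in\mathbb{R}\}$ be the diagonal and $\pi(p)=\big(\tfrac{p.x+p.y}{2},\tfrac{p.x+p.y}{2}\big)$. An augmented matching for finite multisets $A,B\subset\mathbb{R}^2$ is a subset $\Gamma\subset (A\cup\pi(B))\times(B\cup\pi(A))$ such that each element of $A$ and of $B$ (with multiplicity) appears in exactly one pair, and each pair $(a,b)$ is of the form (1) $a\in A,b\in B$, (2) $a\in A,b=\pi(a)$, or (3) $a=\pi(b),b\in B$. $d_W(P,Q)=\min_\Gamma\sum_{(p,q)\in\Gamma}\|p-q\|_2$ over augmented matchings for $P,Q$. Standing assumptions: with $X=P\uplus Q$, the minimum distance between distinct points of $X$ is $1$, the minimum distance from any point of $X$ to $L$ is $1$, $X\subseteq[0,\Delta]^2$ with $\Delta$ a power of $2$. Quadtree: $H$ is $[-\Delta,\Delta]^2$ translated by a vector with coordinates in $[0,\Delta]$ (chosen uniformly at random). For $i=-1,0,\dots,\log_2\Delta$, $G_i$ is the grid of cells of side $2^i$ obtained by repeatedly halving $H$ in each coordinate. A cell is terminal if it intersects $L$. With $P(c),Q(c)$ the number of points of $P$, $Q$ in cell $c$, $$d_T^{per}(P,Q)=\sum_{i=-1}^{\log_2\Delta}2^i\sum_{c\in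 G_i,\ c\text{ non-terminal}}|P(c)-Q(c)|.$$ *)

theory Defs
  imports "HOL-Analysis.Analysis" "HOL-Library.Multiset"
begin

type_synonym pt = "real \<times> real"

definition diag :: "pt set" where
  "diag = {(x, x) | x. True}"

definition proj :: "pt \<Rightarrow> pt" where
  "proj p = ((fst p + snd p) / 2, (fst p + snd p) / 2)"

text \<open>Augmented matchings between finite multisets A, B (as a multiset of pairs, to respect
  multiplicities): pairs of type (1) from A x B, type (2) (a, pi a), type (3) (pi b, b),
  with every element of A and of B occurring in exactly one pair.\<close>
definition aug_matching :: "pt multiset \<Rightarrow> pt multiset \<Rightarrow> (pt \<times> pt) multiset \<Rightarrow> bool" where
  "aug_matching A B \<Gamma> \<longleftrightarrow>
     (\<exists>\<Gamma>1 A2 B3.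
        \<Gamma> = \<Gamma>1 + image_mset (\<lambda>a. (a, proj a)) A2 + image_mset (\<lambda>b. (proj b, b)) B3 \<and>
        A = image_mset fst \<Gamma>1 + A2 \<and>
        B = image_mset snd \<Gamma>1 + B3)"

definition match_cost :: "(pt \<times> pt) multiset \<Rightarrow> real" where
  "match_cost \<Gamma> = sum_mset (image_mset (\<lambda>(p, q). dist p q) \<Gamma>)"

definition d_W :: "pt multiset \<Rightarrow> pt multiset \<Rightarrow> real" where
  "d_W P Q = Inf {match_cost \<Gamma> | \<Gamma>. aug_matching P Q \<Gamma>}"

text \<open>Delta = 2 powr k, shift vector v, so H = [v1-Delta, v1+Delta] x [v2-Delta, v2+Delta].
  At level i (side s = 2 powr i) the grid has N = 2^(k+1-i) cells per axis, indexed by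
  a, b < N; the cell (a,b) is the square
  [o1 + a s, o1 + (a+1) s] x [o2 + b s, o2 + (b+1) s] with org = v - (Delta, Delta).
  Points are assigned to cells by half-open intervals [., .), the last interval of each axis
  being closed, so that the cells of each level partition H.\<close>

definition grid_N :: "int \<Rightarrow> int \<Rightarrow> nat" where
  "grid_N k i = 2 ^ nat (k + 1 - i)"

definition in_slab :: "real \<Rightarrow> real \<Rightarrow> nat \<Rightarrow> nat \<Rightarrow> real \<Rightarrow> bool" where
  "in_slab org s N a x \<longleftrightarrow>
     org + real a * s \<le> x \<and> (x < org + real (a + 1) * s \<or> (a + 1 = N \<and> x = org + real N * s))"

definition cell_square :: "pt \<Rightarrow> real \<Rightarrow> nat \<Rightarrow> nat \<Rightarrow> pt set" where
  "cell_square org s a b =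
     {p. fst org + real a * s \<le> fst p \<and> fst p \<le> fst org + real (a + 1) * s \<and>
         snd org + real b * s \<le> snd p \<and> snd p \<le> snd org + real (b + 1) * s}"

definition cell_count :: "pt multiset \<Rightarrow> pt \<Rightarrow> real \<Rightarrow> nat \<Rightarrow> nat \<Rightarrow> nat \<Rightarrow> real" where
  "cell_count P org s N a b =
     real (size (filter_mset (\<lambda>p. in_slab (fst org) s N a (fst p) \<and> in_slab (snd org) s N b (snd p)) P))"

definition d_T_per :: "int \<Rightarrow> pt \<Rightarrow> pt multiset \<Rightarrow> pt multiset \<Rightarrow> real" where
  "d_T_per k v P Q =
     (let \<Delta> = 2 powr real_of_int k; org = (fst v - \<Delta>, snd v - \<Delta>) in
      \<Sum>i\<in>{-1..k}. 2 powr real_of_int i *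
        (\<Sum>a<grid_N k i. \<Sum>b<grid_N k i.
           if cell_square org (2 powr real_of_int i) a b \<inter> diag \<noteq> {} then 0
           else \<bar>cell_count P org (2 powr real_of_int i) (grid_N k i) a b
                 - cell_count Q org (2 powr real_of_int i) (grid_N k i) a b\<bar>))"

end

theory Submission
  imports Defs
begin

text \<open>
  The bound holds with \<open>C = 4\<close>, witnessed by a greedy matching built by induction on
  \<open>|P| + |Q|\<close>. If some non-terminal cell contains a point \<open>p\<close> of \<open>P\<close> and a point \<open>q\<close>
  of \<open>Q\<close>, choose such a cell on the lowest possible level and match \<open>p\<close> with \<open>q\<close>. One
  level further down, \<open>p\<close> and \<open>q\<close> lie in distinct non-terminal cells, each containing no
  point of the other diagram, so removing \<open>p\<close> and \<open>q\<close> lowers \<open>d_T^per\<close> by at least twice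
  their side, which bounds \<open>dist p q\<close> up to a constant; on all other cells the cost does not
  grow. (On the lowest level \<open>-1\<close> the cells are too small to hold two points at distance
  \<open>\<ge> 1\<close>, so there \<open>p = q\<close>.) If no cell is shared in this way, match any remaining point
  \<open>x\<close> to the diagonal: the cell of \<open>x\<close> on the highest level whose cells have diameter below
  \<open>dist x L \<ge> 1\<close> is non-terminal, contains no point of the other diagram, and has side at
  least \<open>dist x L / 4\<close>.
\<close>

section \<open>Slabs, cell squares and the diagonal\<close>

lemma in_slab_exists:
  assumes "s > 0" "N \<ge> 1" "c \<le> x" "x \<le> c + real N * s"
  shows "\<exists>a<N. in_slab c s N a x"
proof (cases "x = c + real N * s")
  case True
  with assms show ?thesis
    by (intro exI[of _ "N - 1"]) (auto simp: in_slab_def algebra_simps)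
next
  case False
  define a where "a = nat \<lfloor>(x - c) / s\<rfloor>"
  have "real a = of_int \<lfloor>(x - c) / s\<rfloor>"
    using assms by (simp add: a_def)
  then have a: "real a \<le> (x - c) / s" "(x - c) / s < real a + 1"
    by linarith+
  have "c + real a * s \<le> x" "x < c + real (a + 1) * s"
    using a assms by (simp_all add: field_simps)
  moreover have "(x - c) / s < real N"
    using assms False by (simp add: field_simps)
  then have "a < N"
    using a(1) by linarith
  ultimately show ?thesis by (auto simp: in_slab_def)
qed

lemma in_slab_bounds:
  "in_slab c s N a x \<Longrightarrow> c + real a * s \<le> x \<and> x \<le> c + real (a + 1) * s"
  by (auto simp: in_slab_def)

lemma in_slab_unique:
  assumes "s > 0" "a < N" "a' < N" "in_slab c s N a x" "in_slab c s N a' x"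
  shows "a = a'"
proof -
  have "\<not> a < a'" if "in_slab c s N a x" "in_slab c s N a' x" "a' < N" for a a'
  proof
    assume "a < a'"
    then have "real (a + 1) * s \<le> real a' * s"
      using \<open>s > 0\<close> by (intro mult_right_mono) auto
    moreover have "x < c + real (a + 1) * s"
      using that \<open>a < a'\<close> unfolding in_slab_def by auto
    moreover have "c + real a' * s \<le> x"
      using that(2) unfolding in_slab_def by blast
    ultimately show False by linarith
  qed
  then show ?thesis
    using assms by (metis linorder_neqE_nat)
qed

lemma div2_interval_bounds:
  assumes "s \<ge> 0"
  shows "real (n div 2) * (2 * s) \<le> real n * s" "real (n + 1) * s \<le> real (n div 2 + 1) * (2 * s)"
proof -
  have "real (n div 2 * 2) \<le> real n" "real (n + 1) \<le> real ((n div 2 + 1) * 2)"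
    unfolding of_nat_le_iff by presburger+
  then have "real (n div 2) * 2 * s \<le> real n * s" "real (n + 1) * s \<le> (real (n div 2) + 1) * 2 * s"
    using assms by (simp_all add: mult_right_mono)
  then show "real (n div 2) * (2 * s) \<le> real n * s" "real (n + 1) * s \<le> real (n div 2 + 1) * (2 * s)"
    by (simp_all add: algebra_simps)
qed

lemma in_slab_parent:
  assumes "s > 0" "a < 2 * M" "in_slab c s (2 * M) a x"
  shows "a div 2 < M \<and> in_slab c (2 * s) M (a div 2) x"
proof -
  have "c + real (a div 2) * (2 * s) \<le> c + real a * s"
    "c + real (a + 1) * s \<le> c + real (a div 2 + 1) * (2 * s)"
    using div2_interval_bounds[of s a] assms(1) by simp_all
  moreover have "a div 2 < M" "a + 1 = 2 * M \<Longrightarrow> a div 2 + 1 = M"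
    using assms(2) by presburger+
  moreover have "c + real a * s \<le> x"
    "x < c + real (a + 1) * s \<or> a + 1 = 2 * M \<and> x = c + real M * (2 * s)"
    using assms(3) unfolding in_slab_def by auto
  ultimately show ?thesis
    unfolding in_slab_def by auto
qed

lemma dist_le_in_cell_square:
  assumes "x \<in> cell_square org s a b" "y \<in> cell_square org s a b"
  shows "dist x y \<le> sqrt 2 * s"
proof -
  have "\<bar>fst x - fst y\<bar> \<le> s" "\<bar>snd x - snd y\<bar> \<le> s"
    using assms by (auto simp: cell_square_def algebra_simps)
  then have "s \<ge> 0" "(fst x - fst y)\<^sup>2 \<le> s\<^sup>2" "(snd x - snd y)\<^sup>2 \<le> s\<^sup>2"
    by (auto simp: power2_le_iff_abs_le)
  then have "dist x y \<le> sqrt (2 * s\<^sup>2)"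
    by (simp add: dist_prod_def dist_real_def)
  also have "\<dots> = sqrt 2 * s"
    using \<open>s \<ge> 0\<close> by (simp add: real_sqrt_mult)
  finally show ?thesis .
qed

lemma cell_square_subset_parent:
  assumes "s \<ge> 0"
  shows "cell_square org s a b \<subseteq> cell_square org (2 * s) (a div 2) (b div 2)"
  unfolding cell_square_def
  using div2_interval_bounds[OF assms, of a] div2_interval_bounds[OF assms, of b] by auto

lemma dist_proj_le:
  assumes "z \<in> diag"
  shows "dist x (proj x) \<le> dist x z"
proof -
  obtain t where z: "z = (t, t)"
    using assms by (auto simp: diag_def)
  define m where "m = (fst x + snd x) / 2"
  have "(fst x - t)\<^sup>2 + (snd x - t)\<^sup>2 = (fst x - m)\<^sup>2 + (snd x - m)\<^sup>2 + 2 * (m - t)\<^sup>2"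
    by (simp add: m_def power2_eq_square field_simps)
  then have "(fst x - m)\<^sup>2 + (snd x - m)\<^sup>2 \<le> (fst x - t)\<^sup>2 + (snd x - t)\<^sup>2"
    by simp
  then show ?thesis
    by (simp add: z proj_def m_def dist_prod_def dist_real_def)
qed

lemma proj_in_diag: "proj x \<in> diag"
  unfolding proj_def diag_def by blast

lemma dist_proj_le_abs: "dist x (proj x) \<le> \<bar>snd x - fst x\<bar>"
  using dist_proj_le[of "(fst x, fst x)" x]
  by (simp add: diag_def dist_prod_def dist_real_def)

section \<open>Augmented matchings\<close>

lemma aug_matching_empty: "aug_matching {#} {#} {#}"
  unfolding aug_matching_def by auto

lemma aug_matching_add_pair:
  assumes "aug_matching P Q \<Gamma>"
  shows "aug_matching (add_mset p P) (add_mset q Q) (add_mset (p, q) \<Gamma>)"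
proof -
  obtain \<Gamma>1 A2 B3
    where "\<Gamma> = \<Gamma>1 + image_mset (\<lambda>a. (a, proj a)) A2 + image_mset (\<lambda>b. (proj b, b)) B3"
    "P = image_mset fst \<Gamma>1 + A2" "Q = image_mset snd \<Gamma>1 + B3"
    using assms unfolding aug_matching_def by blast
  then show ?thesis
    unfolding aug_matching_def by (intro exI[of _ "add_mset (p, q) \<Gamma>1"] exI[of _ A2] exI[of _ B3]) simp
qed

lemma aug_matching_add_left_diag:
  assumes "aug_matching P Q \<Gamma>"
  shows "aug_matching (add_mset x P) Q (add_mset (x, proj x) \<Gamma>)"
proof -
  obtain \<Gamma>1 A2 B3
    where "\<Gamma> = \<Gamma>1 + image_mset (\<lambda>a. (a, proj a)) A2 + image_mset (\<lambda>b. (proj b, b)) B3"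
    "P = image_mset fst \<Gamma>1 + A2" "Q = image_mset snd \<Gamma>1 + B3"
    using assms unfolding aug_matching_def by blast
  then show ?thesis
    unfolding aug_matching_def by (intro exI[of _ \<Gamma>1] exI[of _ "add_mset x A2"] exI[of _ B3]) simp
qed

lemma aug_matching_add_right_diag:
  assumes "aug_matching P Q \<Gamma>"
  shows "aug_matching P (add_mset x Q) (add_mset (proj x, x) \<Gamma>)"
proof -
  obtain \<Gamma>1 A2 B3
    where "\<Gamma> = \<Gamma>1 + image_mset (\<lambda>a. (a, proj a)) A2 + image_mset (\<lambda>b. (proj b, b)) B3"
    "P = image_mset fst \<Gamma>1 + A2" "Q = image_mset snd \<Gamma>1 + B3"
    using assms unfolding aug_matching_def by blast
  then show ?thesis
    unfolding aug_matching_def by (intro exI[of _ \<Gamma>1] exI[of _ A2] exI[of _ "add_mset x B3"]) simp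
qed

lemma match_cost_add_mset: "match_cost (add_mset (p, q) \<Gamma>) = dist p q + match_cost \<Gamma>"
  by (simp add: match_cost_def)

lemma match_cost_nonneg: "0 \<le> match_cost \<Gamma>"
  unfolding match_cost_def by (induction \<Gamma>) auto

lemma d_W_le_match_cost: "aug_matching P Q \<Gamma> \<Longrightarrow> d_W P Q \<le> match_cost \<Gamma>"
  unfolding d_W_def by (rule cInf_lower) (auto intro: bdd_belowI[of _ 0] match_cost_nonneg)

section \<open>The shifted quadtree\<close>

definition side :: "int \<Rightarrow> real" where
  "side i = 2 powr real_of_int i"

abbreviation base_square :: "int \<Rightarrow> pt set" where
  "base_square k \<equiv> {0..side k} \<times> {0..side k}"

lemma side_pos: "side i > 0"
  by (simp add: side_def)

lemma side_succ: "side (i + 1) = 2 * side i"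
  by (simp add: side_def powr_add)

lemma side_minus_one: "side (-1) = 1 / 2"
  by (simp add: side_def powr_minus)

lemma grid_N_succ:
  assumes "i < k"
  shows "grid_N k i = 2 * grid_N k (i + 1)"
proof -
  have "nat (k + 1 - i) = Suc (nat (k + 1 - (i + 1)))"
    using assms by simp
  then show ?thesis
    by (simp add: grid_N_def)
qed

lemma grid_N_times_side:
  assumes "i \<le> k + 1"
  shows "real (grid_N k i) * side i = 2 * side k"
proof -
  have "real (grid_N k i) * side i = 2 powr real_of_int (k + 1 - i) * 2 powr real_of_int i"
    using assms by (simp add: grid_N_def side_def powr_realpow [symmetric])
  also have "\<dots> = 2 powr (real_of_int k + 1)"
    by (simp flip: powr_add)
  also have "\<dots> = 2 * side k"
    by (simp add: side_def powr_add)
  finally show ?thesis .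
qed

definition admissible_diagram :: "int \<Rightarrow> pt multiset \<Rightarrow> bool" where
  "admissible_diagram k X \<longleftrightarrow>
     (\<forall>x\<in>#X. \<forall>y\<in>#X. x \<noteq> y \<longrightarrow> 1 \<le> dist x y) \<and>
     (\<forall>x\<in>#X. 1 \<le> infdist x diag \<and> x \<in> base_square k)"

lemma admissible_diagram_subset:
  "admissible_diagram k X \<Longrightarrow> Y \<subseteq># X \<Longrightarrow> admissible_diagram k Y"
  unfolding admissible_diagram_def by (meson mset_subset_eqD)

type_synonym cell = "int \<times> nat \<times> nat"

locale shifted_quadtree =
  fixes k :: int and v :: pt
  assumes shift_in_square: "v \<in> base_square k"
begin

definition origin :: pt where
  "origin = (fst v - side k, snd v - side k)"

definition cells :: "cell set" where
  "cells = (SIGMA i:{-1..k}. {..<grid_N k i} \<times> {..<grid_N k i})"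

fun in_cell :: "cell \<Rightarrow> pt \<Rightarrow> bool" where
  "in_cell (i, a, b) x \<longleftrightarrow>
     in_slab (fst origin) (side i) (grid_N k i) a (fst x) \<and>
     in_slab (snd origin) (side i) (grid_N k i) b (snd x)"

declare in_cell.simps [simp del]

fun square :: "cell \<Rightarrow> pt set" where
  "square (i, a, b) = cell_square origin (side i) a b"

fun parent :: "cell \<Rightarrow> cell" where
  "parent (i, a, b) = (i + 1, a div 2, b div 2)"

definition terminal :: "cell \<Rightarrow> bool" where
  "terminal c \<longleftrightarrow> square c \<inter> diag \<noteq> {}"

lemma finite_cells: "finite cells"
  by (simp add: cells_def)

lemma in_cell_imp_in_square: "in_cell c x \<Longrightarrow> x \<in> square c"
  by (cases c) (auto simp: in_cell.simps cell_square_def dest: in_slab_bounds)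

lemma dist_le_in_square:
  "x \<in> square c \<Longrightarrow> y \<in> square c \<Longrightarrow> dist x y \<le> sqrt 2 * side (fst c)"
  by (cases c) (auto intro: dist_le_in_cell_square)

lemma in_cell_exists:
  assumes "x \<in> base_square k" "-1 \<le> i" "i \<le> k"
  shows "\<exists>a b. (i, a, b) \<in> cells \<and> in_cell (i, a, b) x"
proof -
  have "grid_N k i \<ge> 1"
    by (simp add: grid_N_def)
  moreover have "real (grid_N k i) * side i = 2 * side k"
    using assms by (intro grid_N_times_side) simp
  ultimately have "\<exists>a<grid_N k i. in_slab (fst origin) (side i) (grid_N k i) a (fst x)"
    "\<exists>b<grid_N k i. in_slab (snd origin) (side i) (grid_N k i) b (snd x)"
    using assms shift_in_square by (auto simp: origin_def intro!: in_slab_exists side_pos)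
  then show ?thesis
    using assms by (auto simp: cells_def in_cell.simps)
qed

lemma in_cell_unique:
  assumes "c \<in> cells" "c' \<in> cells" "fst c = fst c'" "in_cell c x" "in_cell c' x"
  shows "c = c'"
  using assms in_slab_unique[OF side_pos] by (cases c, cases c') (auto simp: cells_def in_cell.simps)

lemma fst_parent: "fst (parent c) = fst c + 1"
  by (cases c) simp

lemma parent_in_cells:
  assumes "c \<in> cells" "fst c < k" "in_cell c x"
  shows "parent c \<in> cells \<and> in_cell (parent c) x"
proof (cases c)
  case (fields i a b)
  then have "grid_N k i = 2 * grid_N k (i + 1)"
    using assms(2) by (simp add: grid_N_succ)
  then show ?thesis
    using assms in_slab_parent[OF side_pos, of a "grid_N k (i + 1)"]
      in_slab_parent[OF side_pos, of b "grid_N k (i + 1)"]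
    by (auto simp: fields cells_def side_succ in_cell.simps)
qed

lemma square_subset_parent: "square c \<subseteq> square (parent c)"
  by (cases c) (simp add: side_succ cell_square_subset_parent less_imp_le[OF side_pos])

lemma terminal_parent: "terminal c \<Longrightarrow> terminal (parent c)"
  using square_subset_parent unfolding terminal_def by blast

lemma ancestor_in_cells:
  assumes "c \<in> cells" "in_cell c x" "fst c + int n \<le> k"
  shows "(parent ^^ n) c \<in> cells \<and> in_cell ((parent ^^ n) c) x \<and> fst ((parent ^^ n) c) = fst c + int n"
  using assms(3)
proof (induction n)
  case (Suc n)
  then show ?case
    using assms(1,2) parent_in_cells[of "(parent ^^ n) c" x] by (simp add: fst_parent)
qed (use assms in simp)

lemma in_cell_iff_above_common_cell:
  assumes "c \<in> cells" "in_cell c x" "in_cell c y" "c' \<in> cells" "fst c \<le> fst c'"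
  shows "in_cell c' x \<longleftrightarrow> in_cell c' y"
proof -
  define d where "d = (parent ^^ nat (fst c' - fst c)) c"
  have "fst c' \<le> k"
    using assms(4) by (auto simp: cells_def)
  then have "d \<in> cells" "in_cell d x" "in_cell d y" "fst d = fst c'"
    using ancestor_in_cells[OF assms(1,2)] ancestor_in_cells[OF assms(1,3)] assms(5)
    by (simp_all add: d_def)
  then show ?thesis
    using in_cell_unique assms(4) by metis
qed

lemma not_terminal_if_far_from_diag:
  assumes "in_cell c x" "sqrt 2 * side (fst c) < dist x (proj x)"
  shows "\<not> terminal c"
proof
  assume "terminal c"
  then obtain z where "z \<in> square c" "z \<in> diag"
    by (auto simp: terminal_def)
  then have "dist x (proj x) \<le> sqrt 2 * side (fst c)"
    using dist_proj_le dist_le_in_square in_cell_imp_in_square[OF assms(1)] order.trans by blast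
  then show False
    using assms(2) by simp
qed

lemma nonterminal_cell_at_diag_scale:
  assumes "x \<in> base_square k" "1 \<le> infdist x diag"
  obtains c where "c \<in> cells" "in_cell c x" "\<not> terminal c" "dist x (proj x) \<le> 4 * side (fst c)"
proof -
  define d where "d = dist x (proj x)"
  have "1 \<le> d"
    using assms(2) infdist_le[OF proj_in_diag, of x x] by (simp add: d_def)
  have "d \<le> side k"
    using assms(1) dist_proj_le_abs[of x] by (auto simp: d_def)
  define L where "L = {i \<in> {-1..k}. sqrt 2 * side i < d}"
  have "sqrt 2 * side (-1) < 1"
    using sqrt2_less_2 by (simp add: side_minus_one)
  moreover have "side (-1) < side k"
    using \<open>1 \<le> d\<close> \<open>d \<le> side k\<close> by (simp add: side_minus_one)
  then have "-1 \<le> k"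
    unfolding side_def by (subst (asm) powr_less_cancel_iff) auto
  ultimately have "-1 \<in> L"
    using \<open>1 \<le> d\<close> by (simp add: L_def)
  define j where "j = Max L"
  have "finite L"
    by (rule finite_subset[of _ "{-1..k}"]) (auto simp: L_def)
  then have "j \<in> L" and j_max: "\<And>i. i \<in> L \<Longrightarrow> i \<le> j"
    using \<open>-1 \<in> L\<close> by (auto simp: j_def intro: Max_in)
  have "d \<le> 4 * side j"
  proof (cases "j = k")
    case True
    then show ?thesis
      using \<open>d \<le> side k\<close> side_pos[of k] by simp
  next
    case False
    then have "j + 1 \<in> {-1..k}"
      using \<open>j \<in> L\<close> by (auto simp: L_def)
    moreover have "j + 1 \<notin> L"
      using j_max[of "j + 1"] by auto
    ultimately have "d \<le> sqrt 2 * (2 * side j)"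
      by (simp add: L_def side_succ)
    also have "\<dots> \<le> 4 * side j"
      using sqrt2_less_2 side_pos[of j] by simp
    finally show ?thesis .
  qed
  moreover have "-1 \<le> j" "j \<le> k"
    using \<open>j \<in> L\<close> by (auto simp: L_def)
  then obtain a b where "(j, a, b) \<in> cells" "in_cell (j, a, b) x"
    using in_cell_exists[OF assms(1)] by blast
  moreover have "\<not> terminal (j, a, b)"
    using not_terminal_if_far_from_diag[OF \<open>in_cell (j, a, b) x\<close>] \<open>j \<in> L\<close> by (simp add: L_def d_def)
  ultimately show ?thesis
    using that by (simp add: d_def)
qed

section \<open>Cell costs and the greedy matching\<close>

definition occupancy :: "pt multiset \<Rightarrow> cell \<Rightarrow> real" where
  "occupancy P c = real (size (filter_mset (in_cell c) P))"

definition cost :: "pt multiset \<Rightarrow> pt multiset \<Rightarrow> cell \<Rightarrow> real" where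
  "cost P Q c = (if terminal c then 0 else \<bar>occupancy P c - occupancy Q c\<bar>)"

definition mixed :: "pt multiset \<Rightarrow> pt multiset \<Rightarrow> cell \<Rightarrow> bool" where
  "mixed P Q c \<longleftrightarrow> \<not> terminal c \<and> (\<exists>p\<in>#P. in_cell c p) \<and> (\<exists>q\<in>#Q. in_cell c q)"

lemma d_T_per_eq_sum_cells: "d_T_per k v P Q = (\<Sum>c\<in>cells. side (fst c) * cost P Q c)"
proof -
  have "in_cell (i, a, b) = (\<lambda>x. in_slab (fst origin) (side i) (grid_N k i) a (fst x) \<and>
      in_slab (snd origin) (side i) (grid_N k i) b (snd x))" for i a b
    by (simp add: fun_eq_iff in_cell.simps)
  then have "d_T_per k v P Q = (\<Sum>i\<in>{-1..k}. side i * (\<Sum>a<grid_N k i. \<Sum>b<grid_N k i. cost P Q (i, a, b)))"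
    unfolding d_T_per_def Let_def
    by (intro sum.cong refl arg_cong2[where f="(*)"])
      (simp_all add: side_def origin_def cost_def occupancy_def cell_count_def terminal_def)
  also have "\<dots> = (\<Sum>i\<in>{-1..k}. \<Sum>a<grid_N k i. \<Sum>b<grid_N k i. side i * cost P Q (i, a, b))"
    by (simp add: sum_distrib_left)
  also have "\<dots> = (\<Sum>c\<in>cells. side (fst c) * cost P Q c)"
    unfolding cells_def by (simp add: sum.Sigma sum.cartesian_product case_prod_unfold)
  finally show ?thesis .
qed

lemma occupancy_add_mset: "occupancy (add_mset x P) c = occupancy P c + (if in_cell c x then 1 else 0)"
  by (simp add: occupancy_def)

lemma occupancy_eq_0: "(\<forall>x\<in>#P. \<not> in_cell c x) \<Longrightarrow> occupancy P c = 0"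
  by (simp add: occupancy_def filter_mset_eq_conv)

lemma cost_nonneg: "0 \<le> cost P Q c"
  by (simp add: cost_def)

lemma cost_commute: "cost P Q c = cost Q P c"
  by (simp add: cost_def abs_minus_commute)

lemma mixed_commute: "mixed P Q c \<longleftrightarrow> mixed Q P c"
  by (auto simp: mixed_def)

lemma cost_add_mset_outside: "\<not> in_cell c x \<Longrightarrow> cost (add_mset x P) Q c = cost P Q c"
  by (simp add: cost_def occupancy_add_mset)

lemma cost_add_mset_both:
  "in_cell c p \<Longrightarrow> in_cell c q \<Longrightarrow> cost (add_mset p P) (add_mset q Q) c = cost P Q c"
  by (simp add: cost_def occupancy_add_mset)

lemma cost_add_mset_unmixed:
  assumes "in_cell c x" "\<not> terminal c" "\<not> mixed (add_mset x P) Q c"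
  shows "cost (add_mset x P) Q c = cost P Q c + 1"
proof -
  have "occupancy Q c = 0"
    using assms by (intro occupancy_eq_0) (auto simp: mixed_def)
  moreover have "0 \<le> occupancy P c"
    by (simp add: occupancy_def)
  ultimately show ?thesis
    using assms(1,2) by (simp add: cost_def occupancy_add_mset)
qed

lemma cost_add_pair_unshared:
  assumes "in_cell c p" "\<not> in_cell c q" "\<not> terminal c" "\<not> mixed (add_mset p P) (add_mset q Q) c"
  shows "cost (add_mset p P) (add_mset q Q) c = cost P Q c + 1"
proof -
  have "\<not> mixed (add_mset p P) Q c"
    using assms(4) by (auto simp: mixed_def)
  then show ?thesis
    using assms(1-3) cost_add_mset_unmixed cost_add_mset_outside cost_commute by metis
qed

lemma d_T_per_decrease:
  assumes "\<And>c. c \<in> cells \<Longrightarrow> cost P' Q' c \<le> cost P Q c"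
    and "S \<subseteq> cells" "\<And>c. c \<in> S \<Longrightarrow> cost P' Q' c + 1 \<le> cost P Q c"
  shows "d_T_per k v P' Q' + (\<Sum>c\<in>S. side (fst c)) \<le> d_T_per k v P Q"
proof -
  define gain where "gain c = side (fst c) * cost P Q c - side (fst c) * cost P' Q' c" for c
  have "side (fst c) * 1 \<le> gain c" if "c \<in> S" for c
    unfolding gain_def right_diff_distrib [symmetric]
    using assms(3)[OF that] side_pos by (intro mult_left_mono) (auto simp: less_imp_le)
  then have "(\<Sum>c\<in>S. side (fst c)) \<le> sum gain S"
    by (intro sum_mono) simp
  moreover have "side (fst c) * 0 \<le> gain c" if "c \<in> cells" for c
    unfolding gain_def right_diff_distrib [symmetric]
    using assms(1)[OF that] side_pos by (intro mult_left_mono) (auto simp: less_imp_le)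
  then have "sum gain S \<le> sum gain cells"
    using assms(2) finite_cells by (intro sum_mono2) auto
  moreover have "sum gain cells = d_T_per k v P Q - d_T_per k v P' Q'"
    by (simp add: gain_def d_T_per_eq_sum_cells sum_subtractf)
  ultimately show ?thesis by simp
qed

lemma d_T_per_commute: "d_T_per k v P Q = d_T_per k v Q P"
  by (simp add: d_T_per_eq_sum_cells cost_commute)

lemma d_T_per_nonneg: "0 \<le> d_T_per k v P Q"
  by (simp add: d_T_per_eq_sum_cells cost_nonneg side_pos sum_nonneg less_imp_le)

lemma d_T_per_remove_point:
  assumes "x \<in> base_square k" "1 \<le> infdist x diag"
    and unmixed: "\<And>c. c \<in> cells \<Longrightarrow> \<not> mixed (add_mset x P) Q c"
  shows "dist x (proj x) + 4 * d_T_per k v P Q \<le> 4 * d_T_per k v (add_mset x P) Q"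
proof -
  obtain c where c: "c \<in> cells" "in_cell c x" "\<not> terminal c" "dist x (proj x) \<le> 4 * side (fst c)"
    using nonterminal_cell_at_diag_scale[OF assms(1,2)] .
  have "cost P Q c' \<le> cost (add_mset x P) Q c'" if "c' \<in> cells" for c'
  proof (cases "in_cell c' x \<and> \<not> terminal c'")
    case True
    then show ?thesis
      using cost_add_mset_unmixed[OF _ _ unmixed[OF that]] by simp
  next
    case False
    then show ?thesis
      using cost_add_mset_outside[of c' x P Q] by (auto simp: cost_def)
  qed
  moreover have "cost P Q c + 1 \<le> cost (add_mset x P) Q c"
    using cost_add_mset_unmixed[OF c(2,3) unmixed[OF c(1)]] by simp
  ultimately have "d_T_per k v P Q + (\<Sum>c\<in>{c}. side (fst c)) \<le> d_T_per k v (add_mset x P) Q"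
    using c(1) by (intro d_T_per_decrease) auto
  then show ?thesis
    using c(4) by simp
qed

context
  fixes p q :: pt and P Q :: "pt multiset" and c0 :: cell
  assumes c0: "c0 \<in> cells" "in_cell c0 p" "in_cell c0 q" "\<not> terminal c0"
    and lowest: "\<And>c. c \<in> cells \<Longrightarrow> mixed (add_mset p P) (add_mset q Q) c \<Longrightarrow> fst c0 \<le> fst c"
begin

lemma cost_remove_lowest_pair_unshared:
  assumes "c \<in> cells" "\<not> terminal c" "in_cell c p \<noteq> in_cell c q"
  shows "cost P Q c + 1 \<le> cost (add_mset p P) (add_mset q Q) c"
proof -
  have "fst c < fst c0"
    using in_cell_iff_above_common_cell[OF c0(1-3) assms(1)] assms(3) by force
  then have "\<not> mixed (add_mset p P) (add_mset q Q) c"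
    using lowest[OF assms(1)] by (meson not_less)
  then show ?thesis
    using assms cost_add_pair_unshared[of c p q P Q] cost_add_pair_unshared[of c q p Q P]
    by (cases "in_cell c p") (simp_all add: cost_commute mixed_commute)
qed

lemma cost_remove_lowest_pair_mono:
  assumes "c \<in> cells"
  shows "cost P Q c \<le> cost (add_mset p P) (add_mset q Q) c"
proof -
  consider "terminal c" | "in_cell c p" "in_cell c q" | "\<not> in_cell c p" "\<not> in_cell c q"
    | "\<not> terminal c" "in_cell c p \<noteq> in_cell c q"
    by blast
  then show ?thesis
  proof cases
    case 1
    then show ?thesis by (simp add: cost_def)
  next
    case 2
    then show ?thesis by (simp add: cost_add_mset_both)
  next
    case 3
    then have "cost (add_mset p P) (add_mset q Q) c = cost P Q c"
      using cost_add_mset_outside cost_commute by metis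
    then show ?thesis by simp
  next
    case 4
    then show ?thesis
      using cost_remove_lowest_pair_unshared[OF assms] by simp
  qed
qed

lemma child_cell_separating_pair:
  assumes "fst c0 \<noteq> -1" "x = p \<or> x = q" "x \<in> base_square k"
  obtains c where "c \<in> cells" "fst c = fst c0 - 1" "\<not> terminal c" "in_cell c x"
    "in_cell c p \<noteq> in_cell c q"
proof -
  have "-1 \<le> fst c0 - 1" "fst c0 - 1 \<le> k"
    using assms(1) c0(1) by (auto simp: cells_def)
  then obtain a b where c: "(fst c0 - 1, a, b) \<in> cells" "in_cell (fst c0 - 1, a, b) x"
    using in_cell_exists[OF assms(3)] by blast
  define c where "c = (fst c0 - 1, a, b)"
  have "parent c \<in> cells" "in_cell (parent c) x"
    using parent_in_cells[of c x] c c0(1) by (auto simp: c_def cells_def)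
  moreover have "fst (parent c) = fst c0"
    by (simp add: c_def)
  ultimately have "parent c = c0"
    using in_cell_unique[OF _ c0(1)] c0(2,3) assms(2) by blast
  then have "\<not> terminal c"
    using terminal_parent c0(4) by metis
  moreover have "\<not> (in_cell c p \<and> in_cell c q)"
    using lowest[of c] c \<open>\<not> terminal c\<close> by (auto simp: c_def mixed_def)
  ultimately show ?thesis
    using that c assms(2) by (auto simp: c_def)
qed

lemma d_T_per_remove_lowest_pair:
  assumes "p \<in> base_square k" "q \<in> base_square k" "p \<noteq> q \<Longrightarrow> 1 \<le> dist p q"
  shows "dist p q + 4 * d_T_per k v P Q \<le> 4 * d_T_per k v (add_mset p P) (add_mset q Q)"
proof (cases "fst c0 = -1")
  case True
  have "dist p q \<le> sqrt 2 * side (-1)"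
    using dist_le_in_square in_cell_imp_in_square c0(2,3) True by metis
  then have "p = q"
    using assms(3) sqrt2_less_2 by (force simp: side_minus_one)
  moreover have "d_T_per k v P Q + (\<Sum>c\<in>{}. side (fst c)) \<le> d_T_per k v (add_mset p P) (add_mset q Q)"
    using d_T_per_decrease[of P Q "add_mset p P" "add_mset q Q" "{}"] cost_remove_lowest_pair_mono by simp
  ultimately show ?thesis by simp
next
  case False
  obtain cp where cp: "cp \<in> cells" "fst cp = fst c0 - 1" "\<not> terminal cp" "in_cell cp p" "\<not> in_cell cp q"
    using child_cell_separating_pair[OF False _ assms(1)] by blast
  obtain cq where cq: "cq \<in> cells" "fst cq = fst c0 - 1" "\<not> terminal cq" "in_cell cq q" "\<not> in_cell cq p"
    using child_cell_separating_pair[OF False _ assms(2)] by blast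
  have "cp \<noteq> cq"
    using cp cq by blast
  then have "d_T_per k v P Q + (\<Sum>c\<in>{cp, cq}. side (fst c)) \<le> d_T_per k v (add_mset p P) (add_mset q Q)"
    using cp cq cost_remove_lowest_pair_mono cost_remove_lowest_pair_unshared
    by (intro d_T_per_decrease) auto
  moreover have "dist p q \<le> 4 * side (fst c0 - 1)"
  proof -
    have "dist p q \<le> sqrt 2 * side (fst c0)"
      using dist_le_in_square in_cell_imp_in_square c0(2,3) by metis
    also have "\<dots> = sqrt 2 * (2 * side (fst c0 - 1))"
      using side_succ[of "fst c0 - 1"] by simp
    also have "\<dots> \<le> 4 * side (fst c0 - 1)"
      using sqrt2_less_2 side_pos[of "fst c0 - 1"] by simp
    finally show ?thesis .
  qed
  ultimately show ?thesis
    using \<open>cp \<noteq> cq\<close> cp(2) cq(2) side_pos[of "fst c0 - 1"] by simp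
qed

end

lemma lowest_mixed_cell:
  assumes "c \<in> cells" "mixed P Q c"
  obtains c0 p q P' Q' where "c0 \<in> cells" "in_cell c0 p" "in_cell c0 q" "\<not> terminal c0"
    "P = add_mset p P'" "Q = add_mset q Q'" "\<And>c. c \<in> cells \<Longrightarrow> mixed P Q c \<Longrightarrow> fst c0 \<le> fst c"
proof -
  define M where "M = {c \<in> cells. mixed P Q c}"
  have "finite M" "c \<in> M"
    using finite_cells assms by (simp_all add: M_def)
  then obtain c0 where c0: "c0 \<in> M" "\<And>c. c \<in> M \<Longrightarrow> fst c0 \<le> fst c"
    using arg_min_if_finite[of M fst] by (metis empty_iff not_less)
  then obtain p q where "p \<in># P" "q \<in># Q" "in_cell c0 p" "in_cell c0 q" "\<not> terminal c0" "c0 \<in> cells"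
    by (auto simp: M_def mixed_def)
  then show ?thesis
    using that[of c0 p q "P - {#p#}" "Q - {#q#}"] c0(2) by (auto simp: M_def)
qed

lemma d_T_per_remove_mixed_pair:
  assumes "admissible_diagram k (P + Q)" "c \<in> cells" "mixed P Q c"
  obtains p q P' Q' where "P = add_mset p P'" "Q = add_mset q Q'"
    "dist p q + 4 * d_T_per k v P' Q' \<le> 4 * d_T_per k v P Q"
proof -
  obtain c0 p q P' Q' where c0: "c0 \<in> cells" "in_cell c0 p" "in_cell c0 q" "\<not> terminal c0"
    and PQ: "P = add_mset p P'" "Q = add_mset q Q'"
    and lowest: "\<And>c. c \<in> cells \<Longrightarrow> mixed P Q c \<Longrightarrow> fst c0 \<le> fst c"
    using lowest_mixed_cell[OF assms(2,3)] by metis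
  have "dist p q + 4 * d_T_per k v P' Q' \<le> 4 * d_T_per k v P Q"
    using d_T_per_remove_lowest_pair[OF c0 lowest[unfolded PQ]] assms(1)
    by (simp add: PQ admissible_diagram_def)
  then show ?thesis
    using that PQ by blast
qed

lemma d_T_per_remove_point_right:
  assumes "x \<in> base_square k" "1 \<le> infdist x diag"
    and "\<And>c. c \<in> cells \<Longrightarrow> \<not> mixed P (add_mset x Q) c"
  shows "dist (proj x) x + 4 * d_T_per k v P Q \<le> 4 * d_T_per k v P (add_mset x Q)"
  using d_T_per_remove_point[of x Q P] assms by (simp add: mixed_commute d_T_per_commute dist_commute)

lemma greedy_matching:
  assumes "admissible_diagram k (P + Q)"
  shows "\<exists>\<Gamma>. aug_matching P Q \<Gamma> \<and> match_cost \<Gamma> \<le> 4 * d_T_per k v P Q"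
  using assms
proof (induction "size P + size Q" arbitrary: P Q rule: less_induct)
  case less
  have IH: "\<exists>\<Gamma>. aug_matching P' Q' \<Gamma> \<and> match_cost \<Gamma> \<le> 4 * d_T_per k v P' Q'"
    if "P' \<subseteq># P" "Q' \<subseteq># Q" "size P' + size Q' < size P + size Q" for P' Q'
    using less.hyps[OF that(3)] admissible_diagram_subset[OF less.prems] subset_mset.add_mono[OF that(1,2)]
    by blast
  have point: "x \<in> base_square k" "1 \<le> infdist x diag" if "x \<in># P + Q" for x
    using less.prems that by (auto simp: admissible_diagram_def)
  show ?case
  proof (cases "\<exists>c\<in>cells. mixed P Q c")
    case True
    then obtain p q P' Q' where PQ: "P = add_mset p P'" "Q = add_mset q Q'"
      and "dist p q + 4 * d_T_per k v P' Q' \<le> 4 * d_T_per k v P Q"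
      using d_T_per_remove_mixed_pair[OF less.prems] by metis
    moreover obtain \<Gamma> where "aug_matching P' Q' \<Gamma>" "match_cost \<Gamma> \<le> 4 * d_T_per k v P' Q'"
      using IH[of P' Q'] PQ by auto
    ultimately show ?thesis
      by (intro exI[of _ "add_mset (p, q) \<Gamma>"]) (simp add: aug_matching_add_pair match_cost_add_mset)
  next
    case unmixed: False
    show ?thesis
    proof (cases P)
      case (add x P')
      obtain \<Gamma> where "aug_matching P' Q \<Gamma>" "match_cost \<Gamma> \<le> 4 * d_T_per k v P' Q"
        using IH[of P' Q] add by auto
      moreover have "dist x (proj x) + 4 * d_T_per k v P' Q \<le> 4 * d_T_per k v P Q"
        using d_T_per_remove_point[of x P' Q] point[of x] unmixed by (simp add: add)
      ultimately show ?thesis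
        by (intro exI[of _ "add_mset (x, proj x) \<Gamma>"])
          (simp add: add aug_matching_add_left_diag match_cost_add_mset)
    next
      case P_empty: empty
      show ?thesis
      proof (cases Q)
        case (add x Q')
        obtain \<Gamma> where "aug_matching P Q' \<Gamma>" "match_cost \<Gamma> \<le> 4 * d_T_per k v P Q'"
          using IH[of P Q'] add by auto
        moreover have "dist (proj x) x + 4 * d_T_per k v P Q' \<le> 4 * d_T_per k v P Q"
          using d_T_per_remove_point_right[of x P Q'] point[of x] unmixed by (simp add: add)
        ultimately show ?thesis
          by (intro exI[of _ "add_mset (proj x, x) \<Gamma>"])
            (simp add: add aug_matching_add_right_diag match_cost_add_mset)
      next
        case empty
        then show ?thesis
          using P_empty aug_matching_empty d_T_per_nonneg by (auto simp: match_cost_def)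
      qed
    qed
  qed
qed

end

lemma d_W_le_four_d_T_per:
  assumes "admissible_diagram k (P + Q)" "v \<in> base_square k"
  shows "d_W P Q \<le> 4 * d_T_per k v P Q"
proof -
  interpret shifted_quadtree k v
    using assms(2) by unfold_locales
  obtain \<Gamma> where "aug_matching P Q \<Gamma>" "match_cost \<Gamma> \<le> 4 * d_T_per k v P Q"
    using greedy_matching[OF assms(1)] by blast
  then show ?thesis
    using d_W_le_match_cost by (meson order.trans)
qed

theorem lemma8:
  "\<exists>C::real. \<forall>(k::int) (v::pt) (P::pt multiset) (Q::pt multiset).
     (\<forall>x\<in>#P + Q. \<forall>y\<in>#P + Q. x \<noteq> y \<longrightarrow> dist x y \<ge> 1) \<and>
     (\<forall>x\<in>#P + Q. infdist x diag \<ge> 1) \<and>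
     (\<forall>x\<in>#P + Q. 0 \<le> fst x \<and> fst x \<le> 2 powr real_of_int k \<and>
                   0 \<le> snd x \<and> snd x \<le> 2 powr real_of_int k) \<and>
     0 \<le> fst v \<and> fst v \<le> 2 powr real_of_int k \<and> 0 \<le> snd v \<and> snd v \<le> 2 powr real_of_int k
     \<longrightarrow> d_W P Q \<le> C * d_T_per k v P Q"
  by (intro exI[of _ 4] allI impI d_W_le_four_d_T_per)
    (auto simp: admissible_diagram_def side_def mem_Times_iff)

end
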